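(* Let $0=x_1<\dots<x_N=1$ be a partition of $I=[0,1]$, let $\{q_n\}$ be a sequence in $(0,1]$ with $\lim q_n=1$, and let $\alpha_i$, $i\in\mathbb{N}_{N-1}$, be bounded functions on $I$ with $\|\alpha_i\|_\infty<1$. If $S=\{f_s:s\in\mathbb{N}\}\subset C[0,1]$ is dense in $C[0,1]$ (sup-norm), then \[ \bigcup_{n=1}^\infty\operatorname{span}\{\mathcal{F}^{(q_n,\alpha)}_n(f_s):s\in\mathbb{N}\} \] is also dense in $C[0,1]$.
   Context: For $q\in(0,1]$: $[k]_q=\frac{1-q^k}{1-q}$ ($q\ne1$), $[k]_1=k$, $q$-factorials, $\binom{n}{k}_q=\frac{[n]_q!}{[k]_q![n-k]_q!}$. On $[0,1]$ the quantum MKZ operator is $M_{n,q}h(x)=\prod_{j=0}^n(1-q^jx)\sum_{k\ge0}\binom{n+k}{k}_q x^k h\!\left(\frac{[k]_q}{[k+n]_q}\right)$ for $0\le x<1$, $M_{n,q}h(1)=h(1)$. Let $u_i(x)=a_ix+b_i$ be the affine maps with $u_i(0)=x_i$, $u_i(1)=x_{i+1}$, $i\in\mathbb{N}_{N-1}$. For $h\in C[0,1]$, $\mathcal{F}^{(q,\alpha)}_n(h)$ denotes the unique bounded function $G:[0,1]\to\mathbb{R}$ with $G(u_i(x))=h(u_i(x))+\alpha_i(x)(G(x)-M_{n,q}h(x))$ for all $x\in I$, $i\in\mathbb{N}_{N-1}$. *)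

theory Defs
  imports "HOL-Analysis.Analysis"
begin

definition qint :: "real \<Rightarrow> nat \<Rightarrow> real" where
  "qint q k = (if q = 1 then real k else (1 - q ^ k) / (1 - q))"

definition qfact :: "real \<Rightarrow> nat \<Rightarrow> real" where
  "qfact q k = (\<Prod>j = 1..k. qint q j)"

definition qbinom :: "real \<Rightarrow> nat \<Rightarrow> nat \<Rightarrow> real" where
  "qbinom q n k = qfact q n / (qfact q k * qfact q (n - k))"

definition MKZ :: "nat \<Rightarrow> real \<Rightarrow> (real \<Rightarrow> real) \<Rightarrow> real \<Rightarrow> real" where
  "MKZ n q h x =
     (if x = 1 then h 1
      else (\<Prod>j = 0..n. (1 - q ^ j * x)) *
           (\<Sum>k. qbinom q (n + k) k * x ^ k * h (qint q k / qint q (k + n))))"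

definition affmap :: "(nat \<Rightarrow> real) \<Rightarrow> nat \<Rightarrow> real \<Rightarrow> real" where
  "affmap xs i t = (xs (Suc i) - xs i) * t + xs i"

definition fractal ::
  "(nat \<Rightarrow> real) \<Rightarrow> nat \<Rightarrow> (nat \<Rightarrow> real \<Rightarrow> real) \<Rightarrow> nat \<Rightarrow> real \<Rightarrow> (real \<Rightarrow> real) \<Rightarrow> real \<Rightarrow> real"
  where
  "fractal xs N \<alpha> n q h = (THE G.
      (\<forall>t. t \<notin> {0..1} \<longrightarrow> G t = 0) \<and>
      (\<exists>B. \<forall>t\<in>{0..1}. \<bar>G t\<bar> \<le> B) \<and>
      (\<forall>i\<in>{1..N-1}. \<forall>t\<in>{0..1}.
          G (affmap xs i t) = h (affmap xs i t) + \<alpha> i t * (G t - MKZ n q h t)))"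

end

theory Submission
  imports Defs
begin

text \<open>
  The weights of the MKZ operator at x < 1 are a probability distribution on the nodes
  [k]/[k+n] (the generating function of the coefficients is 1 / prod (1 - q^j x)) with mean x
  and second moment at most x/[n] + x^2. Since [n]_{q_n} tends to infinity as q_n tends to 1, the
  Korovkin estimate |M h - h| <= eta + L/[n], valid whenever |h s - h y| <= eta + L (s - y)^2,
  gives uniform convergence of M_{n,q_n} h to h.

  Writing the fractal function as h + H, the self-referential equation says H = A (h - M h + H)
  for the weighted composition operator A (A psi)(u_i t) = alpha_i t * psi t, whose weights are
  bounded by c < 1; the Neumann series of A gives sup |F h - h| <= c sup |h - M h| / (1 - c). Hence, for g continuous, one
  f_s within eps/2 of g and n large enough make the single function F_n(f_s) eps-close to g.
\<close>

section \<open>q-integers\<close>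

lemma qint_eq_sum: "qint q k = (\<Sum>j<k. q ^ j)"
  by (simp add: qint_def sum_gp_strict)

lemma qint_0 [simp]: "qint q 0 = 0"
  by (simp add: qint_eq_sum)

lemma qint_add: "qint q (a + b) = qint q a + q ^ a * qint q b"
  by (induct b) (simp_all add: qint_eq_sum power_add algebra_simps)

lemma qint_Suc: "qint q (Suc k) = 1 + q * qint q k"
  using qint_add[of q 1 k] by (simp add: qint_eq_sum)

lemma qint_nonneg: "0 \<le> q \<Longrightarrow> 0 \<le> qint q k"
  by (simp add: qint_eq_sum sum_nonneg)

lemma qint_ge_1: "0 \<le> q \<Longrightarrow> 1 \<le> k \<Longrightarrow> 1 \<le> qint q k"
  by (cases k) (auto simp: qint_Suc qint_nonneg)

lemma qint_mono: "0 \<le> q \<Longrightarrow> a \<le> b \<Longrightarrow> qint q a \<le> qint q b"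
  using qint_add[of q a "b - a"] qint_nonneg[of q "b - a"] by simp

lemma qint_ge_power:
  assumes "0 \<le> q" "q \<le> 1" shows "real k * q ^ k \<le> qint q k"
proof -
  have "real k * q ^ k = (\<Sum>j<k. q ^ k)" by simp
  also have "\<dots> \<le> (\<Sum>j<k. q ^ j)" using assms by (intro sum_mono power_decreasing) auto
  finally show ?thesis by (simp add: qint_eq_sum)
qed

lemma qfact_0 [simp]: "qfact q 0 = 1"
  by (simp add: qfact_def)

lemma qfact_Suc: "qfact q (Suc k) = qfact q k * qint q (Suc k)"
  by (simp add: qfact_def prod.cl_ivl_Suc)

lemma qfact_pos: "0 \<le> q \<Longrightarrow> 0 < qfact q k"
proof (induct k)
  case (Suc k)
  then show ?case using qint_ge_1[of q "Suc k"] by (simp add: qfact_Suc)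
qed simp

lemma filterlim_qint_at_top:
  assumes q: "\<And>n. 0 \<le> qs n \<and> qs n \<le> 1" and lim: "qs \<longlonglongrightarrow> 1"
  shows "filterlim (\<lambda>n. qint (qs n) n) at_top sequentially"
  unfolding filterlim_at_top
proof
  fix Z :: real
  define m where "m = nat \<lceil>2 * Z\<rceil>"
  have "(\<lambda>n. qs n ^ m) \<longlonglongrightarrow> 1"
    using tendsto_power[OF lim, of m] by simp
  then have "\<forall>\<^sub>F n in sequentially. 1/2 < qs n ^ m"
    by (rule order_tendstoD) simp
  moreover have "\<forall>\<^sub>F n in sequentially. m \<le> n"
    by (rule eventually_ge_at_top)
  ultimately show "\<forall>\<^sub>F n in sequentially. Z \<le> qint (qs n) n"
  proof eventually_elim
    case (elim n)
    have "Z \<le> real m * (1/2)" by (simp add: m_def) linarith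
    also have "\<dots> \<le> real m * qs n ^ m" using elim by (intro mult_left_mono) auto
    also have "\<dots> \<le> qint (qs n) m" using q[of n] by (intro qint_ge_power) auto
    also have "\<dots> \<le> qint (qs n) n" using q[of n] elim by (intro qint_mono) auto
    finally show ?case .
  qed
qed

section \<open>The q-MKZ operator\<close>

definition mkz_coeff :: "nat \<Rightarrow> real \<Rightarrow> nat \<Rightarrow> real" where
  "mkz_coeff n q k = qbinom q (n + k) k"

definition mkz_prod :: "nat \<Rightarrow> real \<Rightarrow> real \<Rightarrow> real" where
  "mkz_prod n q x = (\<Prod>j = 0..n. 1 - q ^ j * x)"

definition mkz_node :: "nat \<Rightarrow> real \<Rightarrow> nat \<Rightarrow> real" where
  "mkz_node n q k = qint q k / qint q (k + n)"

definition mkz_basis :: "nat \<Rightarrow> real \<Rightarrow> real \<Rightarrow> nat \<Rightarrow> real" where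
  "mkz_basis n q x k = mkz_prod n q x * mkz_coeff n q k * x ^ k"

lemma mkz_coeff_eq_qfact: "mkz_coeff n q k = qfact q (n + k) / (qfact q k * qfact q n)"
  by (simp add: mkz_coeff_def qbinom_def)

lemma mkz_coeff_0_right [simp]: "0 \<le> q \<Longrightarrow> mkz_coeff n q 0 = 1"
  using qfact_pos[of q n] by (simp add: mkz_coeff_eq_qfact)

lemma mkz_coeff_0_left [simp]: "0 \<le> q \<Longrightarrow> mkz_coeff 0 q k = 1"
  using qfact_pos[of q k] by (simp add: mkz_coeff_eq_qfact)

lemma mkz_coeff_nonneg: "0 \<le> q \<Longrightarrow> 0 \<le> mkz_coeff n q k"
  using qfact_pos[of q] by (simp add: mkz_coeff_eq_qfact less_imp_le)

lemma mkz_coeff_Suc_Suc: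
  assumes "0 \<le> q"
  shows "mkz_coeff (Suc n) q (Suc k) = mkz_coeff n q (Suc k) + q ^ Suc n * mkz_coeff (Suc n) q k"
proof -
  have "qint q (Suc (Suc (n + k))) = qint q (Suc n) + q ^ Suc n * qint q (Suc k)"
    using qint_add[of q "Suc n" "Suc k"] by simp
  moreover have "0 < qfact q (n + k)" "0 < qfact q k" "0 < qfact q n"
    "0 < qint q (Suc k)" "0 < qint q (Suc n)" "0 < qint q (Suc (n + k))"
    using qfact_pos[OF assms] qint_ge_1[OF assms] by (auto intro: less_le_trans[OF zero_less_one])
  ultimately show ?thesis
    by (simp add: mkz_coeff_eq_qfact qfact_Suc field_simps)
qed

lemma mkz_coeff_Suc_right:
  assumes "0 \<le> q"
  shows "mkz_coeff n q (Suc k) * qint q (Suc k) = mkz_coeff n q k * qint q (Suc k + n)"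
proof -
  have "0 < qfact q (n + k)" "0 < qfact q k" "0 < qfact q n" "0 < qint q (Suc k)"
    using qfact_pos[OF assms] qint_ge_1[OF assms] by (auto intro: less_le_trans[OF zero_less_one])
  then show ?thesis
    by (simp add: mkz_coeff_eq_qfact qfact_Suc field_simps)
qed

lemma mkz_coeff_Suc_left:
  assumes "0 \<le> q"
  shows "mkz_coeff (Suc n) q k = (\<Sum>i\<le>k. (q ^ Suc n) ^ i * mkz_coeff n q (k - i))"
proof (induct k)
  case (Suc k)
  have "(\<Sum>i\<le>Suc k. (q ^ Suc n) ^ i * mkz_coeff n q (Suc k - i))
      = mkz_coeff n q (Suc k) + q ^ Suc n * (\<Sum>i\<le>k. (q ^ Suc n) ^ i * mkz_coeff n q (k - i))"
    by (subst sum.atMost_Suc_shift) (simp add: sum_distrib_left mult.assoc)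
  then show ?case
    using Suc mkz_coeff_Suc_Suc[OF assms, of n k] by simp
qed (use assms in simp)

lemma mkz_prod_pos:
  assumes "0 \<le> q" "q \<le> 1" "0 \<le> x" "x < 1"
  shows "0 < mkz_prod n q x"
  unfolding mkz_prod_def
proof (rule prod_pos)
  fix j
  have "q ^ j * x \<le> x"
    using assms by (intro mult_left_le_one_le power_le_one) auto
  then show "0 < 1 - q ^ j * x" using assms by simp
qed

lemma mkz_coeff_power_sums:
  assumes q: "0 \<le> q" "q \<le> 1" and x: "0 \<le> x" "x < 1"
  shows "(\<lambda>k. mkz_coeff n q k * x ^ k) sums (1 / mkz_prod n q x)"
proof (induct n)
  case 0
  then show ?case
    using geometric_sums[of x] x q by (simp add: mkz_prod_def)
next
  case (Suc n)
  define r where "r = q ^ Suc n * x"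
  have "r \<le> x"
    unfolding r_def using q x by (intro mult_left_le_one_le power_le_one) auto
  then have r: "0 \<le> r" "r < 1"
    using q x by (auto simp: r_def)
  have "(\<lambda>k. r ^ k) sums (1 / (1 - r))"
    using geometric_sums[of r] r by simp
  then have "(\<lambda>k. \<Sum>i\<le>k. r ^ i * (mkz_coeff n q (k - i) * x ^ (k - i)))
      sums ((1 / (1 - r)) * (1 / mkz_prod n q x))"
    using Cauchy_product_sums[of "\<lambda>k. r ^ k" "\<lambda>k. mkz_coeff n q k * x ^ k"] Suc r x q
    by (simp add: sums_iff abs_mult mkz_coeff_nonneg)
  moreover have "(\<Sum>i\<le>k. r ^ i * (mkz_coeff n q (k - i) * x ^ (k - i))) = mkz_coeff (Suc n) q k * x ^ k" for k
    unfolding mkz_coeff_Suc_left[OF q(1)] sum_distrib_right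
    by (intro sum.cong refl) (simp add: r_def power_mult_distrib power_add[symmetric])
  moreover have "mkz_prod (Suc n) q x = mkz_prod n q x * (1 - r)"
    by (simp add: mkz_prod_def r_def)
  ultimately show ?case by (simp add: mult.commute)
qed

lemma mkz_node_0 [simp]: "mkz_node n q 0 = 0"
  by (simp add: mkz_node_def)

lemma mkz_node_in_unit:
  assumes "0 \<le> q" "1 \<le> n"
  shows "mkz_node n q k \<in> {0..1}"
proof -
  have "qint q k \<le> qint q (k + n)" "0 < qint q (k + n)"
    using qint_mono[OF assms(1)] qint_ge_1[OF assms(1), of "k + n"] assms(2) by auto
  then show ?thesis using qint_nonneg[OF assms(1), of k] by (simp add: mkz_node_def)
qed

lemma mkz_node_Suc_le:
  assumes q: "0 \<le> q" "q \<le> 1" and n: "1 \<le> n"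
  shows "mkz_node n q (Suc k) \<le> 1 / qint q n + mkz_node n q k"
proof -
  have pos: "0 < qint q n" using qint_ge_1[OF q(1) n] by simp
  have mono: "qint q n \<le> qint q (k + n)" "qint q (k + n) \<le> qint q (Suc k + n)"
    using qint_mono[OF q(1)] by auto
  have "q * qint q k \<le> qint q k"
    using q qint_nonneg[OF q(1), of k] by (simp add: mult_left_le_one_le)
  then have "q * qint q k / qint q (Suc k + n) \<le> qint q k / qint q (k + n)"
    using pos mono q(1) by (intro frac_le) (auto simp: qint_nonneg)
  moreover have "1 / qint q (Suc k + n) \<le> 1 / qint q n"
    using pos mono by (intro divide_left_mono) auto
  ultimately show ?thesis
    by (simp add: mkz_node_def qint_Suc add_divide_distrib)
qed

lemma mkz_basis_nonneg:
  assumes "0 \<le> q" "q \<le> 1" "0 \<le> x" "x < 1"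
  shows "0 \<le> mkz_basis n q x k"
  using mkz_prod_pos[OF assms, of n] mkz_coeff_nonneg[OF assms(1), of n k] assms(3)
  by (simp add: mkz_basis_def)

lemma mkz_basis_sums:
  assumes "0 \<le> q" "q \<le> 1" "0 \<le> x" "x < 1"
  shows "mkz_basis n q x sums 1"
proof -
  have "(\<lambda>k. mkz_prod n q x * (mkz_coeff n q k * x ^ k)) sums 1"
    using sums_mult[OF mkz_coeff_power_sums[OF assms, of n], of "mkz_prod n q x"] mkz_prod_pos[OF assms, of n]
    by simp
  then show ?thesis by (simp add: mkz_basis_def[abs_def] mult.assoc)
qed

lemma mkz_basis_Suc_node:
  assumes "0 \<le> q"
  shows "mkz_basis n q x (Suc k) * mkz_node n q (Suc k) = x * mkz_basis n q x k"
proof -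
  have "0 < qint q (Suc k + n)" using qint_ge_1[OF assms, of "Suc k + n"] by simp
  then show ?thesis
    using mkz_coeff_Suc_right[OF assms, of n k]
    by (simp add: mkz_basis_def mkz_node_def field_simps)
qed

lemma mkz_basis_first_moment:
  assumes "0 \<le> q" "q \<le> 1" "0 \<le> x" "x < 1"
  shows "(\<lambda>k. mkz_basis n q x k * mkz_node n q k) sums x"
proof -
  have "(\<lambda>k. mkz_basis n q x (Suc k) * mkz_node n q (Suc k)) sums x"
    using sums_mult[OF mkz_basis_sums[OF assms, of n], of x] by (simp add: mkz_basis_Suc_node assms(1))
  then show ?thesis
    using sums_Suc_iff[of "\<lambda>k. mkz_basis n q x k * mkz_node n q k" x] by simp
qed

lemma mkz_basis_second_moment:
  assumes q: "0 \<le> q" "q \<le> 1" and n: "1 \<le> n" and x: "0 \<le> x" "x < 1"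
  obtains T where "(\<lambda>k. mkz_basis n q x k * mkz_node n q k ^ 2) sums T"
    and "T \<le> x / qint q n + x ^ 2"
proof -
  define b where "b = mkz_basis n q x"
  define t where "t = mkz_node n q"
  have b: "b sums 1" "(\<lambda>k. b k * t k) sums x" "\<And>k. 0 \<le> b k"
    using mkz_basis_sums[OF q x] mkz_basis_first_moment[OF q x] mkz_basis_nonneg[OF q x]
    by (simp_all add: b_def t_def)
  define g where "g k = x * b k / qint q n + x * (b k * t k)" for k
  have "g sums (x * 1 / qint q n + x * x)"
    unfolding g_def by (intro sums_add sums_divide sums_mult b)
  then have g: "g sums (x / qint q n + x ^ 2)"
    by (simp add: power2_eq_square)
  have le: "b (Suc k) * t (Suc k) ^ 2 \<le> g k" for k
  proof -
    have "b (Suc k) * t (Suc k) ^ 2 = x * b k * t (Suc k)"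
      using mkz_basis_Suc_node[OF q(1), of n x k] by (simp add: b_def t_def power2_eq_square)
    also have "\<dots> \<le> x * b k * (1 / qint q n + t k)"
      using mkz_node_Suc_le[OF q n, of k] x b(3)[of k] by (intro mult_left_mono) (auto simp: t_def)
    finally show ?thesis by (simp add: g_def distrib_left mult.assoc)
  qed
  have summable: "summable (\<lambda>k. b (Suc k) * t (Suc k) ^ 2)"
    by (rule summable_comparison_test'[OF sums_summable[OF g], of 0]) (use le b(3) in simp)
  show ?thesis
  proof
    show "(\<lambda>k. mkz_basis n q x k * mkz_node n q k ^ 2) sums (\<Sum>k. b (Suc k) * t (Suc k) ^ 2)"
      using summable_sums[OF summable] sums_Suc_iff[of "\<lambda>k. b k * t k ^ 2"]
      by (simp add: b_def t_def)
    show "(\<Sum>k. b (Suc k) * t (Suc k) ^ 2) \<le> x / qint q n + x ^ 2"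
      using suminf_le[OF le summable] g by (simp add: sums_iff)
  qed
qed

lemma MKZ_eq_basis_sum:
  assumes "0 \<le> q" "q \<le> 1" "0 \<le> x" "x < 1"
    and "(\<lambda>k. mkz_basis n q x k * h (mkz_node n q k)) sums y"
  shows "MKZ n q h x = y"
proof -
  have P: "0 < mkz_prod n q x" using mkz_prod_pos[OF assms(1-4)] .
  have "(\<lambda>k. mkz_coeff n q k * x ^ k * h (mkz_node n q k)) sums (y / mkz_prod n q x)"
    using sums_divide[OF assms(5), of "mkz_prod n q x"] P by (simp add: mkz_basis_def mult.assoc)
  moreover have "MKZ n q h x = mkz_prod n q x * (\<Sum>k. mkz_coeff n q k * x ^ k * h (mkz_node n q k))"
    using assms(4) by (simp add: MKZ_def mkz_prod_def mkz_coeff_def mkz_node_def)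
  ultimately show ?thesis
    using P by (simp add: sums_iff)
qed

lemma MKZ_at_0:
  assumes "0 \<le> q" "q \<le> 1"
  shows "MKZ n q h 0 = h 0"
proof (rule MKZ_eq_basis_sum[OF assms])
  have "(\<lambda>k. mkz_basis n q 0 k * h (mkz_node n q k)) = (\<lambda>k. if k = 0 then h 0 else 0)"
    using assms by (auto simp: mkz_basis_def mkz_prod_def)
  then show "(\<lambda>k. mkz_basis n q 0 k * h (mkz_node n q k)) sums h 0"
    using sums_single[of 0 "\<lambda>_. h 0"] by simp
qed simp_all

lemma sums_weighted_deviation:
  fixes b t :: "nat \<Rightarrow> real"
  assumes b: "b sums 1" "(\<lambda>k. b k * t k) sums x" "(\<lambda>k. b k * t k ^ 2) sums T" "\<And>k. 0 \<le> b k"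
    and modulus: "\<And>k. \<bar>h (t k) - h x\<bar> \<le> e + L * (t k - x) ^ 2"
  obtains y where "(\<lambda>k. b k * h (t k)) sums y" "\<bar>y - h x\<bar> \<le> e + L * (T - x ^ 2)"
proof -
  define d where "d k = b k * (h (t k) - h x)" for k
  define g where "g k = e * b k + L * (b k * t k ^ 2 - 2 * x * (b k * t k) + x ^ 2 * b k)" for k
  have g: "g sums (e * 1 + L * (T - 2 * x * x + x ^ 2 * 1))"
    unfolding g_def by (intro sums_add sums_mult sums_diff b)
  have d_le: "\<bar>d k\<bar> \<le> g k" for k
  proof -
    have "b k * \<bar>h (t k) - h x\<bar> \<le> b k * (e + L * (t k - x) ^ 2)"
      using modulus b(4) by (rule mult_left_mono)
    moreover have "\<bar>d k\<bar> = b k * \<bar>h (t k) - h x\<bar>"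
      using b(4)[of k] by (simp add: d_def abs_mult)
    ultimately show ?thesis
      by (simp add: g_def power2_eq_square algebra_simps)
  qed
  have d: "summable d"
    by (rule summable_comparison_test'[OF sums_summable[OF g], of 0]) (use d_le in simp)
  have "suminf d \<le> suminf g"
    using d_le by (intro suminf_le d sums_summable[OF g]) (simp add: abs_le_iff)
  moreover have "- suminf d \<le> suminf g"
    using d_le suminf_minus[OF d, symmetric]
    by (simp add: suminf_le summable_minus[OF d] sums_summable[OF g] abs_le_iff)
  moreover have "suminf g = e + L * (T - x ^ 2)"
    using g by (simp add: sums_iff power2_eq_square)
  ultimately have "\<bar>suminf d\<bar> \<le> e + L * (T - x ^ 2)" by simp
  moreover have "(\<lambda>k. h x * b k + d k) sums (h x * 1 + suminf d)"
    by (intro sums_add sums_mult b summable_sums d)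
  then have "(\<lambda>k. b k * h (t k)) sums (h x + suminf d)"
    by (simp add: d_def algebra_simps)
  ultimately show ?thesis using that by simp
qed

lemma MKZ_approx:
  assumes q: "0 \<le> q" "q \<le> 1" and n: "1 \<le> n" and x: "x \<in> {0..1}" and L: "0 \<le> L"
    and modulus: "\<And>s y. s \<in> {0..1} \<Longrightarrow> y \<in> {0..1} \<Longrightarrow> \<bar>h s - h y\<bar> \<le> e + L * (s - y) ^ 2"
  shows "\<bar>MKZ n q h x - h x\<bar> \<le> e + L / qint q n"
proof (cases "x = 1")
  case True
  have "0 \<le> e" using modulus[of 1 1] by simp
  moreover have "0 \<le> L / qint q n" using L qint_nonneg[OF q(1)] by simp
  ultimately show ?thesis using True by (simp add: MKZ_def)
next
  case False
  with x have x: "0 \<le> x" "x < 1" by auto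
  obtain T where T: "(\<lambda>k. mkz_basis n q x k * mkz_node n q k ^ 2) sums T" "T \<le> x / qint q n + x ^ 2"
    using mkz_basis_second_moment[OF q n x] by blast
  have "\<bar>h (mkz_node n q k) - h x\<bar> \<le> e + L * (mkz_node n q k - x) ^ 2" for k
    using modulus mkz_node_in_unit[OF q(1) n] x by simp
  then obtain y where y: "(\<lambda>k. mkz_basis n q x k * h (mkz_node n q k)) sums y"
    and deviation: "\<bar>y - h x\<bar> \<le> e + L * (T - x ^ 2)"
    using sums_weighted_deviation[OF mkz_basis_sums[OF q x] mkz_basis_first_moment[OF q x] T(1)
        mkz_basis_nonneg[OF q x]]
    by blast
  have "MKZ n q h x = y"
    using y by (rule MKZ_eq_basis_sum[OF q x])
  also note deviation
  also have "e + L * (T - x ^ 2) \<le> e + L * (x / qint q n)"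
    using T(2) L by (intro add_left_mono mult_left_mono) auto
  also have "\<dots> \<le> e + L * (1 / qint q n)"
    using x L qint_nonneg[OF q(1), of n]
    by (intro add_left_mono mult_left_mono divide_right_mono) auto
  finally show ?thesis by simp
qed

lemma continuous_on_quadratic_modulus:
  fixes h :: "real \<Rightarrow> real"
  assumes S: "compact S" and h: "continuous_on S h" and e: "0 < e"
  obtains L where "0 \<le> L" and "\<And>s y. s \<in> S \<Longrightarrow> y \<in> S \<Longrightarrow> \<bar>h s - h y\<bar> \<le> e + L * (s - y) ^ 2"
proof -
  obtain d where d: "0 < d" and close: "\<And>s y. s \<in> S \<Longrightarrow> y \<in> S \<Longrightarrow> dist s y < d \<Longrightarrow> dist (h s) (h y) < e"
    using compact_uniformly_continuous[OF h S] e unfolding uniformly_continuous_on_def by metis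
  obtain K where K: "\<And>s. s \<in> S \<Longrightarrow> \<bar>h s\<bar> \<le> K"
    using compact_imp_bounded[OF compact_continuous_image[OF h S]] by (auto simp: bounded_iff)
  define L where "L = 2 * max K 0 / d ^ 2"
  show ?thesis
  proof
    show L: "0 \<le> L" using d by (simp add: L_def)
    fix s y assume s: "s \<in> S" and y: "y \<in> S"
    show "\<bar>h s - h y\<bar> \<le> e + L * (s - y) ^ 2"
    proof (cases "\<bar>s - y\<bar> < d")
      case True
      then have "\<bar>h s - h y\<bar> < e" using close[OF s y] by (simp add: dist_real_def)
      moreover have "0 \<le> L * (s - y) ^ 2" using d by (simp add: L_def)
      ultimately show ?thesis by linarith
    next
      case False
      then have "d ^ 2 \<le> (s - y) ^ 2" using d by (metis abs_le_square_iff abs_of_pos not_less)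
      then have "L * d ^ 2 \<le> L * (s - y) ^ 2"
        using L by (rule mult_left_mono)
      moreover have "L * d ^ 2 = 2 * max K 0" using d by (simp add: L_def)
      ultimately show ?thesis using K[OF s] K[OF y] e by linarith
    qed
  qed
qed

lemma eventually_MKZ_uniformly_close:
  assumes h: "continuous_on {0..1} h"
    and q: "\<And>n. 0 \<le> qs n \<and> qs n \<le> 1" and lim: "qs \<longlonglongrightarrow> 1" and e: "0 < e"
  shows "\<forall>\<^sub>F n in sequentially. \<forall>x\<in>{0..1}. \<bar>MKZ n (qs n) h x - h x\<bar> \<le> e"
proof -
  obtain L where L: "0 \<le> L" and modulus: "\<And>s y. s \<in> {0..1} \<Longrightarrow> y \<in> {0..1} \<Longrightarrow> \<bar>h s - h y\<bar> \<le> e / 2 + L * (s - y) ^ 2"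
    using continuous_on_quadratic_modulus[OF compact_Icc h, of "e / 2"] e by auto
  have "\<forall>\<^sub>F n in sequentially. 2 * L / e + 1 \<le> qint (qs n) n"
    using filterlim_qint_at_top[OF q lim] by (simp add: filterlim_at_top)
  moreover have "\<forall>\<^sub>F n in sequentially. 1 \<le> n"
    by (rule eventually_ge_at_top)
  ultimately show ?thesis
  proof eventually_elim
    case (elim n)
    have pos: "0 < qint (qs n) n"
      using elim(1) L e by (smt (verit) divide_nonneg_nonneg)
    have "L = e / 2 * (2 * L / e)" using e by simp
    also have "\<dots> \<le> e / 2 * qint (qs n) n"
      using elim(1) e by (intro mult_left_mono) auto
    finally have "L / qint (qs n) n \<le> e / 2"
      using pos by (simp add: divide_le_eq mult.commute)
    show ?case
    proof
      fix x :: real assume "x \<in> {0..1}"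
      then have "\<bar>MKZ n (qs n) h x - h x\<bar> \<le> e / 2 + L / qint (qs n) n"
        using q[of n] elim(2) L modulus by (intro MKZ_approx) auto
      with \<open>L / qint (qs n) n \<le> e / 2\<close> show "\<bar>MKZ n (qs n) h x - h x\<bar> \<le> e" by linarith
    qed
  qed
qed

section \<open>Weighted composition operators\<close>

lemma finite_uniform_bound_below_1:
  fixes \<alpha> :: "'i \<Rightarrow> 'a \<Rightarrow> real"
  assumes "finite I" "\<And>i. i \<in> I \<Longrightarrow> \<exists>c<1. \<forall>t\<in>S. \<bar>\<alpha> i t\<bar> \<le> c"
  obtains c where "0 \<le> c" "c < 1" "\<And>i t. i \<in> I \<Longrightarrow> t \<in> S \<Longrightarrow> \<bar>\<alpha> i t\<bar> \<le> c"
proof -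
  have "\<exists>c. 0 \<le> c \<and> c < 1 \<and> (\<forall>i\<in>I. \<forall>t\<in>S. \<bar>\<alpha> i t\<bar> \<le> c)"
    using assms
  proof (induct I rule: finite_induct)
    case (insert i I)
    obtain c where "0 \<le> c" "c < 1" "\<forall>j\<in>I. \<forall>t\<in>S. \<bar>\<alpha> j t\<bar> \<le> c"
      using insert by blast
    moreover obtain c' where "c' < 1" "\<forall>t\<in>S. \<bar>\<alpha> i t\<bar> \<le> c'"
      using insert by blast
    ultimately show ?case
      by (intro exI[of _ "max c c'"]) (auto intro: le_max_iff_disj[THEN iffD2])
  qed auto
  then show ?thesis using that by blast
qed

lemma contracted_bounded_eq_0:
  fixes D :: "'a \<Rightarrow> real"
  assumes c: "0 \<le> c" "c < 1" and bounded: "\<And>z. z \<in> S \<Longrightarrow> \<bar>D z\<bar> \<le> B"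
    and contracted: "\<And>z. z \<in> S \<Longrightarrow> \<exists>u\<in>S. \<bar>D z\<bar> \<le> c * \<bar>D u\<bar>"
    and z: "z \<in> S"
  shows "D z = 0"
proof -
  have iterate: "\<forall>z\<in>S. \<bar>D z\<bar> \<le> c ^ k * B" for k
  proof (induct k)
    case (Suc k)
    show ?case
    proof
      fix z assume "z \<in> S"
      then obtain u where "u \<in> S" "\<bar>D z\<bar> \<le> c * \<bar>D u\<bar>" using contracted by blast
      then show "\<bar>D z\<bar> \<le> c ^ Suc k * B"
        using Suc c by (smt (verit) mult.assoc mult_left_mono power_Suc)
    qed
  qed (use bounded in simp)
  have "(\<lambda>k. c ^ k * B) \<longlonglongrightarrow> 0"
    using c by (intro tendsto_mult_left_zero LIMSEQ_power_zero) simp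
  then have "\<bar>D z\<bar> \<le> 0"
    by (rule LIMSEQ_le_const) (use iterate z in auto)
  then show ?thesis by simp
qed

lemma weighted_composition_power_bound:
  fixes A :: "('a \<Rightarrow> real) \<Rightarrow> 'a \<Rightarrow> real"
  assumes A: "\<And>y. \<exists>a u. \<bar>a\<bar> \<le> c \<and> u \<in> S \<and> (\<forall>\<psi>. A \<psi> y = a * \<psi> u)"
    and c: "0 \<le> c" and \<phi>: "\<And>t. t \<in> S \<Longrightarrow> \<bar>\<phi> t\<bar> \<le> E"
  shows "\<bar>(A ^^ Suc k) \<phi> y\<bar> \<le> c ^ Suc k * E"
proof -
  have A_bound: "\<bar>A \<psi> y\<bar> \<le> c * K" if "\<And>t. t \<in> S \<Longrightarrow> \<bar>\<psi> t\<bar> \<le> K" for \<psi> K y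
  proof -
    obtain a u where "\<bar>a\<bar> \<le> c" "u \<in> S" "A \<psi> y = a * \<psi> u" using A by blast
    then show ?thesis
      using that[of u] c by (simp add: abs_mult mult_mono)
  qed
  show ?thesis
  proof (induct k arbitrary: y)
    case 0 then show ?case using A_bound[OF \<phi>] by simp
  next
    case (Suc k) then show ?case using A_bound[of "(A ^^ Suc k) \<phi>"] by (simp add: mult.assoc)
  qed
qed

lemma neumann_series_weighted_composition:
  fixes A :: "('a \<Rightarrow> real) \<Rightarrow> 'a \<Rightarrow> real"
  assumes A: "\<And>y. \<exists>a u. \<bar>a\<bar> \<le> c \<and> u \<in> S \<and> (\<forall>\<psi>. A \<psi> y = a * \<psi> u)"
    and c: "0 \<le> c" "c < 1" and \<phi>: "\<And>t. t \<in> S \<Longrightarrow> \<bar>\<phi> t\<bar> \<le> E"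
  defines "H \<equiv> \<lambda>y. \<Sum>k. (A ^^ Suc k) \<phi> y"
  shows "H y = A (\<lambda>t. \<phi> t + H t) y" and "\<bar>H y\<bar> \<le> c * E / (1 - c)"
proof -
  note iterate = weighted_composition_power_bound[where A = A and S = S and \<phi> = \<phi>, OF A c(1) \<phi>]
  have geometric: "(\<lambda>k. c ^ Suc k * E) sums (c * E / (1 - c))"
    using sums_mult[OF geometric_sums[of c], of "c * E"] c by (simp add: mult_ac)
  have summable: "summable (\<lambda>k. (A ^^ Suc k) \<phi> y)" for y
    by (rule summable_comparison_test'[OF sums_summable[OF geometric], of 0]) (use iterate in simp)
  show "\<bar>H y\<bar> \<le> c * E / (1 - c)"
  proof -
    have "H y \<le> (\<Sum>k. c ^ Suc k * E)"
      unfolding H_def using iterate abs_le_iff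
      by (intro suminf_le summable sums_summable[OF geometric]) blast
    moreover have "(\<Sum>k. - (c ^ Suc k * E)) \<le> H y"
      unfolding H_def using iterate
      by (intro suminf_le summable sums_summable[OF sums_minus[OF geometric]])
        (metis abs_le_iff minus_le_iff)
    ultimately show ?thesis
      using geometric sums_minus[OF geometric] by (simp add: sums_iff)
  qed
  obtain a u where a: "\<forall>\<psi>. A \<psi> y = a * \<psi> u" using A by blast
  have "(\<lambda>k. (A ^^ k) \<phi> u) sums (\<phi> u + H u)"
    using summable_sums[OF summable[of u]] sums_Suc_iff[of "\<lambda>k. (A ^^ k) \<phi> u"]
    by (simp add: H_def add.commute)
  then have "(\<lambda>k. (A ^^ Suc k) \<phi> y) sums (a * (\<phi> u + H u))"
    using sums_mult[of _ _ a] a by simp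
  then show "H y = A (\<lambda>t. \<phi> t + H t) y"
    using a by (simp add: H_def sums_iff)
qed

section \<open>Fractal functions\<close>

locale unit_partition =
  fixes xs :: "nat \<Rightarrow> real" and N :: nat
  assumes two_le_N: "2 \<le> N" and xs_1: "xs 1 = 0" and xs_N: "xs N = 1"
    and xs_less: "\<And>i. 1 \<le> i \<Longrightarrow> i < N \<Longrightarrow> xs i < xs (Suc i)"
begin

lemma xs_mono:
  assumes "1 \<le> i" "i \<le> j" "j \<le> N"
  shows "xs i \<le> xs j"
  using assms(2,3)
proof (induct j rule: dec_induct)
  case (step j) then show ?case using xs_less[of j] assms(1) by simp
qed simp

lemma affmap_bounds:
  assumes i: "i \<in> {1..N-1}" and t: "t \<in> {0..1}"
  shows "xs i \<le> affmap xs i t" "affmap xs i t \<le> xs (Suc i)" "affmap xs i t \<in> {0..1}"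
proof -
  have d: "0 < xs (Suc i) - xs i" using xs_less[of i] i two_le_N by auto
  show "xs i \<le> affmap xs i t" using d t by (simp add: affmap_def)
  have "(xs (Suc i) - xs i) * t \<le> xs (Suc i) - xs i" using d t by (intro mult_left_le) auto
  then show "affmap xs i t \<le> xs (Suc i)" by (simp add: affmap_def)
  moreover have "0 \<le> xs i" "xs (Suc i) \<le> 1"
    using xs_mono[of 1 i] xs_mono[of "Suc i" N] i two_le_N xs_1 xs_N by auto
  ultimately show "affmap xs i t \<in> {0..1}" using \<open>xs i \<le> affmap xs i t\<close> by simp
qed

definition cell :: "real \<Rightarrow> nat" where
  "cell y = (LEAST i. 1 \<le> i \<and> i < N \<and> y \<le> xs (Suc i))"

definition cell_coord :: "real \<Rightarrow> real" where
  "cell_coord y = (y - xs (cell y)) / (xs (Suc (cell y)) - xs (cell y))"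

lemma cell_bounds:
  assumes y: "y \<in> {0..1}"
  shows "cell y \<in> {1..N-1}" "xs (cell y) \<le> y" "y \<le> xs (Suc (cell y))"
proof -
  have "1 \<le> N - 1 \<and> N - 1 < N \<and> y \<le> xs (Suc (N - 1))"
    using two_le_N xs_N y by (simp add: Suc_diff_1)
  then have least: "1 \<le> cell y \<and> cell y < N \<and> y \<le> xs (Suc (cell y))"
    unfolding cell_def by (rule LeastI)
  then show "cell y \<in> {1..N-1}" "y \<le> xs (Suc (cell y))" by auto
  show "xs (cell y) \<le> y"
  proof (cases "cell y = 1")
    case True then show ?thesis using xs_1 y by simp
  next
    case False
    then have "\<not> y \<le> xs (Suc (cell y - 1))"
      using not_less_Least[of "cell y - 1" "\<lambda>i. 1 \<le> i \<and> i < N \<and> y \<le> xs (Suc i)"] least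
      unfolding cell_def by auto
    then show ?thesis using False least by simp
  qed
qed

lemma cell_cover:
  assumes "y \<in> {0..1}"
  shows "cell_coord y \<in> {0..1}" "affmap xs (cell y) (cell_coord y) = y"
proof -
  note bounds = cell_bounds[OF assms]
  have "0 < xs (Suc (cell y)) - xs (cell y)" using xs_less bounds(1) by auto
  then show "cell_coord y \<in> {0..1}" "affmap xs (cell y) (cell_coord y) = y"
    using bounds by (auto simp: cell_coord_def affmap_def field_simps)
qed

text \<open>A point shared by two neighbouring cells is assigned to the left one, where it has
  coordinate 1 instead of 0.\<close>

lemma cell_coord_affmap:
  assumes i: "i \<in> {1..N-1}" and t: "t \<in> {0..1}"
  shows "cell (affmap xs i t) = i \<and> cell_coord (affmap xs i t) = t \<or>
    t = 0 \<and> cell_coord (affmap xs i t) = 1"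
proof -
  define y where "y = affmap xs i t"
  define j where "j = cell y"
  have y: "y \<in> {0..1}" "xs i \<le> y" "y \<le> xs (Suc i)"
    using affmap_bounds[OF i t] by (auto simp: y_def)
  have j: "j \<in> {1..N-1}" "xs j \<le> y" "y \<le> xs (Suc j)"
    using cell_bounds[OF y(1)] by (auto simp: j_def)
  have "j \<le> i" unfolding j_def cell_def using i y two_le_N by (intro Least_le) auto
  have d: "0 < xs (Suc i) - xs i" "0 < xs (Suc j) - xs j"
    using xs_less i j two_le_N by auto
  show ?thesis
  proof (cases "j = i")
    case True
    then show ?thesis
      using d unfolding cell_coord_def j_def[symmetric] y_def by (simp add: affmap_def j_def y_def)
  next
    case False
    with \<open>j \<le> i\<close> have "xs (Suc j) \<le> xs i" using xs_mono[of "Suc j" i] i by simp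
    then have "y = xs i" "y = xs (Suc j)" using y j by auto
    then have "t = 0" "cell_coord y = 1"
      using d unfolding cell_coord_def j_def[symmetric] by (simp_all add: y_def affmap_def)
    then show ?thesis by (simp add: y_def)
  qed
qed

end

locale fractal_setting = unit_partition +
  fixes \<alpha> :: "nat \<Rightarrow> real \<Rightarrow> real" and c :: real
  assumes c_nonneg: "0 \<le> c" and c_less_1: "c < 1"
    and \<alpha>_bound: "\<And>i t. i \<in> {1..N-1} \<Longrightarrow> t \<in> {0..1} \<Longrightarrow> \<bar>\<alpha> i t\<bar> \<le> c"
begin

definition is_fractal :: "(real \<Rightarrow> real) \<Rightarrow> (real \<Rightarrow> real) \<Rightarrow> (real \<Rightarrow> real) \<Rightarrow> bool" where
  "is_fractal h b G \<longleftrightarrow>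
     (\<forall>t. t \<notin> {0..1} \<longrightarrow> G t = 0) \<and>
     (\<exists>B. \<forall>t\<in>{0..1}. \<bar>G t\<bar> \<le> B) \<and>
     (\<forall>i\<in>{1..N-1}. \<forall>t\<in>{0..1}. G (affmap xs i t) = h (affmap xs i t) + \<alpha> i t * (G t - b t))"

lemma fractal_eq_The: "fractal xs N \<alpha> n q h = (THE G. is_fractal h (MKZ n q h) G)"
  by (simp add: fractal_def is_fractal_def)

definition scaling_op :: "(real \<Rightarrow> real) \<Rightarrow> real \<Rightarrow> real" where
  "scaling_op \<psi> y = (if y \<in> {0..1} then \<alpha> (cell y) (cell_coord y) * \<psi> (cell_coord y) else 0)"

lemma scaling_op_pointwise: "\<exists>a u. \<bar>a\<bar> \<le> c \<and> u \<in> {0..1} \<and> (\<forall>\<psi>. scaling_op \<psi> y = a * \<psi> u)"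
proof (cases "y \<in> {0..1}")
  case True
  then show ?thesis
    using \<alpha>_bound[OF cell_bounds(1) cell_cover(1)] cell_cover(1)
    by (intro exI[of _ "\<alpha> (cell y) (cell_coord y)"] exI[of _ "cell_coord y"]) (simp add: scaling_op_def)
next
  case False
  then show ?thesis using c_nonneg by (intro exI[of _ 0] exI[of _ 0]) (auto simp: scaling_op_def)
qed

lemma scaling_op_affmap:
  assumes "\<psi> 0 = 0" "\<psi> 1 = 0" and i: "i \<in> {1..N-1}" and t: "t \<in> {0..1}"
  shows "scaling_op \<psi> (affmap xs i t) = \<alpha> i t * \<psi> t"
  using cell_coord_affmap[OF i t] affmap_bounds(3)[OF i t] assms(1,2)
  by (auto simp: scaling_op_def)

lemma scaling_op_endpoints:
  assumes "\<psi> 0 = 0" "\<psi> 1 = 0"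
  shows "scaling_op \<psi> 0 = 0" "scaling_op \<psi> 1 = 0"
proof -
  have "affmap xs 1 0 = 0" "affmap xs (N - 1) 1 = 1"
    using two_le_N xs_1 xs_N by (simp_all add: affmap_def Suc_diff_1)
  then show "scaling_op \<psi> 0 = 0" "scaling_op \<psi> 1 = 0"
    using scaling_op_affmap[OF assms, of 1 0] scaling_op_affmap[OF assms, of "N - 1" 1] two_le_N assms
    by auto
qed

lemma is_fractal_unique:
  assumes G: "is_fractal h b G" and G': "is_fractal h b G'"
  shows "G = G'"
proof
  fix y
  show "G y = G' y"
  proof (cases "y \<in> {0..1}")
    case False
    then show ?thesis using G G' by (simp add: is_fractal_def)
  next
    case True
    obtain B B' where "\<And>t. t \<in> {0..1} \<Longrightarrow> \<bar>G t\<bar> \<le> B" "\<And>t. t \<in> {0..1} \<Longrightarrow> \<bar>G' t\<bar> \<le> B'"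
      using G G' unfolding is_fractal_def by blast
    then have bounded: "\<bar>G t - G' t\<bar> \<le> B + B'" if "t \<in> {0..1}" for t
      using that by (smt (verit))
    have contracted: "\<exists>u\<in>{0..1}. \<bar>G z - G' z\<bar> \<le> c * \<bar>G u - G' u\<bar>" if z: "z \<in> {0..1}" for z
    proof
      let ?i = "cell z" and ?u = "cell_coord z"
      have i: "?i \<in> {1..N-1}" and u: "?u \<in> {0..1}" and z_eq: "affmap xs ?i ?u = z"
        using cell_bounds(1)[OF z] cell_cover[OF z] by auto
      have "G z = h z + \<alpha> ?i ?u * (G ?u - b ?u)" "G' z = h z + \<alpha> ?i ?u * (G' ?u - b ?u)"
        using G G' i u z_eq unfolding is_fractal_def by metis+
      then have "G z - G' z = \<alpha> ?i ?u * (G ?u - G' ?u)"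
        by (simp add: algebra_simps)
      then show "\<bar>G z - G' z\<bar> \<le> c * \<bar>G ?u - G' ?u\<bar>"
        using \<alpha>_bound[OF i u] by (simp add: abs_mult mult_right_mono)
      show "?u \<in> {0..1}" by (rule u)
    qed
    show ?thesis
      using contracted_bounded_eq_0[OF c_nonneg c_less_1 bounded contracted True] by simp
  qed
qed

definition fractal_correction :: "(real \<Rightarrow> real) \<Rightarrow> real \<Rightarrow> real" where
  "fractal_correction \<phi> y = (\<Sum>k. (scaling_op ^^ Suc k) \<phi> y)"

lemma fractal_correction:
  assumes \<phi>: "\<And>t. t \<in> {0..1} \<Longrightarrow> \<bar>\<phi> t\<bar> \<le> E" and ends: "\<phi> 0 = 0" "\<phi> 1 = 0"
  shows "\<bar>fractal_correction \<phi> y\<bar> \<le> c * E / (1 - c)"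
    and "\<And>i t. i \<in> {1..N-1} \<Longrightarrow> t \<in> {0..1} \<Longrightarrow>
      fractal_correction \<phi> (affmap xs i t) = \<alpha> i t * (\<phi> t + fractal_correction \<phi> t)"
proof -
  let ?H = "fractal_correction \<phi>"
  note neumann = neumann_series_weighted_composition[where A = scaling_op and S = "{0..1}"
      and \<phi> = \<phi> and E = E, OF scaling_op_pointwise c_nonneg c_less_1 \<phi>,
      folded fractal_correction_def]
  show "\<bar>?H y\<bar> \<le> c * E / (1 - c)" by (rule neumann(2))
  have "(scaling_op ^^ k) \<phi> 0 = 0 \<and> (scaling_op ^^ k) \<phi> 1 = 0" for k
    by (induct k) (simp_all add: ends scaling_op_endpoints)
  then have "?H 0 = 0" "?H 1 = 0"
    unfolding fractal_correction_def by (simp_all del: funpow.simps)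
  then show "?H (affmap xs i t) = \<alpha> i t * (\<phi> t + ?H t)" if "i \<in> {1..N-1}" "t \<in> {0..1}" for i t
    using neumann(1)[of "affmap xs i t"] scaling_op_affmap[of "\<lambda>t. \<phi> t + ?H t", OF _ _ that] ends
    by simp
qed

lemma is_fractal_exists:
  assumes h: "\<And>t. t \<in> {0..1} \<Longrightarrow> \<bar>h t\<bar> \<le> K"
    and ends: "b 0 = h 0" "b 1 = h 1"
    and E: "\<And>t. t \<in> {0..1} \<Longrightarrow> \<bar>h t - b t\<bar> \<le> E"
  obtains G where "is_fractal h b G" "\<And>y. y \<in> {0..1} \<Longrightarrow> \<bar>G y - h y\<bar> \<le> c * E / (1 - c)"
proof -
  define H where "H = fractal_correction (\<lambda>t. h t - b t)"
  have H: "\<bar>H y\<bar> \<le> c * E / (1 - c)"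
    "\<And>i t. i \<in> {1..N-1} \<Longrightarrow> t \<in> {0..1} \<Longrightarrow> H (affmap xs i t) = \<alpha> i t * (h t - b t + H t)" for y
    unfolding H_def using fractal_correction[of "\<lambda>t. h t - b t", OF E] ends by auto
  define G where "G y = (if y \<in> {0..1} then h y + H y else 0)" for y
  show ?thesis
  proof
    show "\<bar>G y - h y\<bar> \<le> c * E / (1 - c)" if "y \<in> {0..1}" for y
      using that H(1) by (simp add: G_def)
    have "\<bar>G t\<bar> \<le> K + c * E / (1 - c)" if t: "t \<in> {0..1}" for t
      using abs_triangle_ineq[of "h t" "H t"] h[OF t] H(1)[of t] t by (simp add: G_def)
    moreover have "G (affmap xs i t) = h (affmap xs i t) + \<alpha> i t * (G t - b t)"
      if "i \<in> {1..N-1}" "t \<in> {0..1}" for i t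
      using H(2)[OF that] affmap_bounds(3)[OF that] that by (simp add: G_def)
    ultimately show "is_fractal h b G"
      unfolding is_fractal_def by (auto simp: G_def intro!: exI[of _ "K + c * E / (1 - c)"])
  qed
qed

lemma fractal_MKZ_close:
  assumes q: "0 \<le> q" "q \<le> 1" and h: "\<And>t. t \<in> {0..1} \<Longrightarrow> \<bar>h t\<bar> \<le> K"
    and E: "\<And>t. t \<in> {0..1} \<Longrightarrow> \<bar>h t - MKZ n q h t\<bar> \<le> E"
    and y: "y \<in> {0..1}"
  shows "\<bar>fractal xs N \<alpha> n q h y - h y\<bar> \<le> c * E / (1 - c)"
proof -
  have "MKZ n q h 1 = h 1" by (simp add: MKZ_def)
  then obtain G where G: "is_fractal h (MKZ n q h) G" "\<And>y. y \<in> {0..1} \<Longrightarrow> \<bar>G y - h y\<bar> \<le> c * E / (1 - c)"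
    using is_fractal_exists[of h K "MKZ n q h" E, OF h MKZ_at_0[OF q]] E by blast
  have "fractal xs N \<alpha> n q h = G"
    unfolding fractal_eq_The using G(1) is_fractal_unique by (intro the1_equality) blast+
  then show ?thesis using G(2) y by simp
qed

lemma eventually_fractal_uniformly_close:
  assumes h: "continuous_on {0..1} h"
    and q: "\<And>n. 0 \<le> qs n \<and> qs n \<le> 1" and lim: "qs \<longlonglongrightarrow> 1" and e: "0 < e"
  shows "\<forall>\<^sub>F n in sequentially. \<forall>t\<in>{0..1}. \<bar>fractal xs N \<alpha> n (qs n) h t - h t\<bar> \<le> e"
proof -
  have "bounded (h ` {0..1})"
    by (intro compact_imp_bounded compact_continuous_image h compact_Icc)
  then obtain K where K: "\<And>t. t \<in> {0..1} \<Longrightarrow> \<bar>h t\<bar> \<le> K"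
    unfolding bounded_iff by (metis image_eqI real_norm_def)
  have "\<forall>\<^sub>F n in sequentially. \<forall>t\<in>{0..1}. \<bar>MKZ n (qs n) h t - h t\<bar> \<le> (1 - c) * e"
    using c_less_1 e by (intro eventually_MKZ_uniformly_close[OF h q lim]) simp
  then show ?thesis
  proof eventually_elim
    case (elim n)
    show ?case
    proof
      fix t :: real assume t: "t \<in> {0..1}"
      have "\<bar>fractal xs N \<alpha> n (qs n) h t - h t\<bar> \<le> c * ((1 - c) * e) / (1 - c)"
        using q[of n] elim K t by (intro fractal_MKZ_close[where K = K]) (auto simp: abs_minus_commute)
      also have "\<dots> = c * e"
        using c_less_1 by simp
      also have "\<dots> \<le> e"
        using c_nonneg c_less_1 e by (intro mult_left_le_one_le) auto
      finally show "\<bar>fractal xs N \<alpha> n (qs n) h t - h t\<bar> \<le> e" .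
    qed
  qed
qed

end

theorem theorem5p3:
  fixes xs :: "nat \<Rightarrow> real" and N :: nat
    and qs :: "nat \<Rightarrow> real"
    and \<alpha> :: "nat \<Rightarrow> real \<Rightarrow> real"
    and f :: "nat \<Rightarrow> real \<Rightarrow> real"
  assumes "2 \<le> N" and "xs 1 = 0" and "xs N = 1"
    and "\<And>i. 1 \<le> i \<Longrightarrow> i < N \<Longrightarrow> xs i < xs (Suc i)"
    and "\<And>n. 0 < qs n \<and> qs n \<le> 1"
    and "qs \<longlonglongrightarrow> 1"
    and "\<And>i. i \<in> {1..N-1} \<Longrightarrow> \<exists>c<1. \<forall>t\<in>{0..1}. \<bar>\<alpha> i t\<bar> \<le> c"
    and "\<And>s. continuous_on {0..1} (f s)"
    and "\<And>g \<epsilon>. continuous_on {0..1} g \<Longrightarrow> \<epsilon> > 0 \<Longrightarrow>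
            \<exists>s. \<forall>t\<in>{0..1}. \<bar>g t - f s t\<bar> \<le> \<epsilon>"
  shows "\<forall>g \<epsilon>. continuous_on {0..1} g \<longrightarrow> \<epsilon> > 0 \<longrightarrow>
     (\<exists>n\<ge>1. \<exists>T c. finite T \<and>
        (\<forall>t\<in>{0..1}. \<bar>g t - (\<Sum>s\<in>T. c s * fractal xs N \<alpha> n (qs n) (f s) t)\<bar> \<le> \<epsilon>))"
proof (intro allI impI)
  fix g :: "real \<Rightarrow> real" and \<epsilon> :: real
  assume g: "continuous_on {0..1} g" and \<epsilon>: "\<epsilon> > 0"
  obtain c where c: "0 \<le> c" "c < 1" "\<And>i t. i \<in> {1..N-1} \<Longrightarrow> t \<in> {0..1} \<Longrightarrow> \<bar>\<alpha> i t\<bar> \<le> c"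
    using finite_uniform_bound_below_1[where I = "{1..N-1}" and S = "{0..1}" and \<alpha> = \<alpha>] assms(7) by auto
  interpret fractal_setting xs N \<alpha> c
    using assms(1-4) c by unfold_locales auto
  obtain s where s: "\<And>t. t \<in> {0..1} \<Longrightarrow> \<bar>g t - f s t\<bar> \<le> \<epsilon> / 2"
    using assms(9)[OF g, of "\<epsilon> / 2"] \<epsilon> by (metis half_gt_zero)
  have "\<forall>\<^sub>F n in sequentially. 1 \<le> n \<and>
      (\<forall>t\<in>{0..1}. \<bar>fractal xs N \<alpha> n (qs n) (f s) t - f s t\<bar> \<le> \<epsilon> / 2)"
    using assms(5) \<epsilon>
    by (intro eventually_conj eventually_ge_at_top eventually_fractal_uniformly_close assms(6,8))
      (auto simp: less_imp_le)
  then obtain n where n: "1 \<le> n" "\<forall>t\<in>{0..1}. \<bar>fractal xs N \<alpha> n (qs n) (f s) t - f s t\<bar> \<le> \<epsilon> / 2"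
    using eventually_happens'[OF sequentially_bot] by blast
  show "\<exists>n\<ge>1. \<exists>T c. finite T \<and>
      (\<forall>t\<in>{0..1}. \<bar>g t - (\<Sum>s\<in>T. c s * fractal xs N \<alpha> n (qs n) (f s) t)\<bar> \<le> \<epsilon>)"
  proof (intro exI[of _ n] exI[of _ "{s}"] exI[of _ "\<lambda>_. 1"] conjI ballI)
    fix t :: real assume t: "t \<in> {0..1}"
    have "\<bar>fractal xs N \<alpha> n (qs n) (f s) t - f s t\<bar> \<le> \<epsilon> / 2" using n(2) t by blast
    with s[OF t] show "\<bar>g t - (\<Sum>s\<in>{s}. 1 * fractal xs N \<alpha> n (qs n) (f s) t)\<bar> \<le> \<epsilon>"
      unfolding abs_le_iff by simp
  qed (use n(1) in simp_all)
qed

end
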